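(* Let $b>1$ and suppose $P$ satisfies $(1/2,b)$-multiplicative-expansion on $\mathcal{X}$. Suppose moreover that the following implication (constant-expansion guarantee) holds for classifiers $G$: whenever $P$ satisfies $(c,\rho)$-constant-expansion for some $c$, $\mathcal{R}_{\mathcal{A}}(G)<\rho$, and $\min_i P(\{x: G(x)=i\})>2\max\{c,\mathcal{R}_{\mathcal{A}}(G)\}$, there is a permutation $\pi:[K]\to[K]$ with $P(\{x:\pi(G(x))\neq G^*(x)\})\le \max\{c,\mathcal{R}_{\mathcal{A}}(G)\}+\mathcal{R}_{\mathcal{A}}(G)$. If a classifier $G:\mathcal{X}\to[K]$ satisfies $$\min_{i\in[K]}\mathbb{E}_P[\mathbf{1}(G(x)=i)]>\max\left\{\tfrac{2}{b-1},2\right\}\mathcal{R}_{\mathcal{A}}(G),$$ then $\mathrm{Err}_{\mathrm{unsup}}(G)\le\max\left\{\tfrac{b}{b-1},2\right\}\mathcal{R}_{\mathcal{A}}(G)$.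
   Context: $P$ is a distribution on $\mathcal{X}$ with ground-truth labelling $G^*:\mathcal{X}\to[K]$, $\mathcal{Q}_i:=\{x:G^*(x)=i\}$, $P_i(S)=P(S\cap\mathcal{Q}_i)/P(\mathcal{Q}_i)$. With augmentation maps $\mathcal{T}_{wa}$ and radius $r$: $\mathcal{A}(x):=\{x':\exists T\in\mathcal{T}_{wa},\ \|x'-T(x)\|\le r\}$, $\mathcal{N}(x):=\{x':\mathcal{A}(x)\cap\mathcal{A}(x')\neq\emptyset\}$, $\mathcal{N}(S):=\bigcup_{x\in S}\mathcal{N}(x)$, $\mathcal{N}^*(S):=\bigcup_{i}(\mathcal{N}(S\cap\mathcal{Q}_i)\cap\mathcal{Q}_i)$. $(a,b)$-multiplicative-expansion: for every $i$ and $S\subseteq\mathcal{Q}_i$ with $P_i(S)\le a$, $P_i(\mathcal{N}(S))\ge\min\{bP_i(S),1\}$. $(c,\rho)$-constant-expansion: for every $S$ with $P(S)\ge c$ and $P(S\cap\mathcal{Q}_i)\le P(\mathcal{Q}_i)/2$ for all $i$, $P(\mathcal{N}^*(S)\setminus S)\ge\min\{\rho,P(S)\}$. Consistency regularization loss: $\mathcal{R}_{\mathcal{A}}(G):=\mathbb{E}_{x\sim P}[\mathbf{1}(\exists x'\in\mathcal{A}(x)\text{ with }G(x')\neq G(x))]$. Unsupervised error: $\mathrm{Err}_{\mathrm{unsup}}(G):=\min_{\pi}P(\{x:\pi(G(x))\neq G^*(x)\})$, minimum over permutations $\pi$ of $[K]$. *)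

theory Defs
  imports "HOL-Probability.Probability" "HOL-Combinatorics.Permutations"
begin

text \<open>Outer probability of an arbitrary subset of the sample space (the sets
  N(S), N*(S) and the consistency-violation set need not be measurable).\<close>
definition outP :: "'a measure \<Rightarrow> 'a set \<Rightarrow> real" where
  "outP P S = Inf {measure P T | T. T \<in> sets P \<and> S \<subseteq> T}"

definition augset :: "'a measure \<Rightarrow> ('a \<Rightarrow> 'a::real_normed_vector) set \<Rightarrow> real \<Rightarrow> 'a \<Rightarrow> 'a set" where
  "augset P Twa r x = {x' \<in> space P. \<exists>T\<in>Twa. norm (x' - T x) \<le> r}"

definition nbhd :: "'a measure \<Rightarrow> ('a \<Rightarrow> 'a::real_normed_vector) set \<Rightarrow> real \<Rightarrow> 'a \<Rightarrow> 'a set" where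
  "nbhd P Twa r x = {x' \<in> space P. augset P Twa r x \<inter> augset P Twa r x' \<noteq> {}}"

definition nbhd_set :: "'a measure \<Rightarrow> ('a \<Rightarrow> 'a::real_normed_vector) set \<Rightarrow> real \<Rightarrow> 'a set \<Rightarrow> 'a set" where
  "nbhd_set P Twa r S = (\<Union>x\<in>S. nbhd P Twa r x)"

definition cls :: "'a measure \<Rightarrow> ('a \<Rightarrow> nat) \<Rightarrow> nat \<Rightarrow> 'a set" where
  "cls P Gs i = {x \<in> space P. Gs x = i}"

definition nbhd_star :: "'a measure \<Rightarrow> ('a \<Rightarrow> 'a::real_normed_vector) set \<Rightarrow> real \<Rightarrow> ('a \<Rightarrow> nat) \<Rightarrow> nat \<Rightarrow> 'a set \<Rightarrow> 'a set" where
  "nbhd_star P Twa r Gs K S = (\<Union>i\<in>{1..K}. nbhd_set P Twa r (S \<inter> cls P Gs i) \<inter> cls P Gs i)"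

definition mult_expansion :: "'a measure \<Rightarrow> ('a \<Rightarrow> 'a::real_normed_vector) set \<Rightarrow> real \<Rightarrow> ('a \<Rightarrow> nat) \<Rightarrow> nat \<Rightarrow> real \<Rightarrow> real \<Rightarrow> bool" where
  "mult_expansion P Twa r Gs K a b \<longleftrightarrow>
     (\<forall>i\<in>{1..K}. \<forall>S\<in>sets P. S \<subseteq> cls P Gs i \<longrightarrow>
        measure P S / measure P (cls P Gs i) \<le> a \<longrightarrow>
        outP P (nbhd_set P Twa r S \<inter> cls P Gs i) / measure P (cls P Gs i)
          \<ge> min (b * (measure P S / measure P (cls P Gs i))) 1)"

definition const_expansion :: "'a measure \<Rightarrow> ('a \<Rightarrow> 'a::real_normed_vector) set \<Rightarrow> real \<Rightarrow> ('a \<Rightarrow> nat) \<Rightarrow> nat \<Rightarrow> real \<Rightarrow> real \<Rightarrow> bool" where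
  "const_expansion P Twa r Gs K c \<rho> \<longleftrightarrow>
     (\<forall>S\<in>sets P. measure P S \<ge> c \<longrightarrow>
        (\<forall>i\<in>{1..K}. measure P (S \<inter> cls P Gs i) \<le> measure P (cls P Gs i) / 2) \<longrightarrow>
        outP P (nbhd_star P Twa r Gs K S - S) \<ge> min \<rho> (measure P S))"

definition consist_loss :: "'a measure \<Rightarrow> ('a \<Rightarrow> 'a::real_normed_vector) set \<Rightarrow> real \<Rightarrow> ('a \<Rightarrow> nat) \<Rightarrow> real" where
  "consist_loss P Twa r G = outP P {x \<in> space P. \<exists>x'\<in>augset P Twa r x. G x' \<noteq> G x}"

definition min_class_mass :: "'a measure \<Rightarrow> nat \<Rightarrow> ('a \<Rightarrow> nat) \<Rightarrow> real" where
  "min_class_mass P K G = Min ((\<lambda>i. measure P {x \<in> space P. G x = i}) ` {1..K})"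

definition err_unsup :: "'a measure \<Rightarrow> ('a \<Rightarrow> nat) \<Rightarrow> nat \<Rightarrow> ('a \<Rightarrow> nat) \<Rightarrow> real" where
  "err_unsup P Gs K G = Min ((\<lambda>\<pi>. measure P {x \<in> space P. \<pi> (G x) \<noteq> Gs x}) ` {\<pi>. \<pi> permutes {1..K}})"

definition classifier :: "'a measure \<Rightarrow> nat \<Rightarrow> ('a \<Rightarrow> nat) \<Rightarrow> bool" where
  "classifier P K G \<longleftrightarrow> G \<in> measurable P (count_space UNIV) \<and> (\<forall>x\<in>space P. G x \<in> {1..K})"

end

theory Submission
  imports Defs
begin

text \<open>Multiplicative expansion implies constant expansion: a set S that fills at most half
  of every class Q_i gains, inside each class, at least min (b - 1) 1 \<cdot> P(S \<inter> Q_i) of new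
  neighbourhood mass, so N*(S) - S has mass at least min (b - 1) 1 \<cdot> P(S), which is at least
  min \<rho> P(S) once P(S) \<ge> \<rho> / (b - 1). Feeding this into the constant-expansion guarantee with
  \<rho> slightly above R_A(G) gives Err_unsup(G) \<le> max (R_A(G) / (b - 1)) R_A(G) + R_A(G), which is
  the claimed bound; the slack in \<rho> is removed by letting it tend to R_A(G).\<close>

lemma outP_ge:
  assumes "A \<subseteq> space P" "\<And>T. T \<in> sets P \<Longrightarrow> A \<subseteq> T \<Longrightarrow> x \<le> measure P T"
  shows "x \<le> outP P A"
  unfolding outP_def by (rule cInf_greatest) (use assms in auto)

lemma outP_le:
  assumes "T \<in> sets P" "A \<subseteq> T"
  shows "outP P A \<le> measure P T"
  unfolding outP_def
  by (rule cInf_lower) (use assms in \<open>auto intro!: bdd_belowI[where m=0]\<close>)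

lemma outP_nonneg: "A \<subseteq> space P \<Longrightarrow> 0 \<le> outP P A"
  by (rule outP_ge) auto

lemma outP_le_outP_diff_add:
  assumes "finite_measure P" "A \<subseteq> space P" "S \<in> sets P"
  shows "outP P A \<le> outP P (A - S) + measure P S"
proof -
  have "outP P A - measure P S \<le> outP P (A - S)"
  proof (rule outP_ge)
    fix T assume T: "T \<in> sets P" "A - S \<subseteq> T"
    have "outP P A \<le> measure P (T \<union> S)"
      using T assms by (intro outP_le) auto
    also have "\<dots> \<le> measure P T + measure P S"
      using T assms by (intro measure_Un_le) auto
    finally show "outP P A - measure P S \<le> measure P T" by simp
  qed (use assms in auto)
  then show ?thesis by simp
qed

lemma outP_sum_le_outP_UNION:
  assumes "finite_measure P" "finite I" "\<And>i. i \<in> I \<Longrightarrow> Q i \<in> sets P"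
    "disjoint_family_on Q I" "\<And>i. i \<in> I \<Longrightarrow> A i \<subseteq> Q i"
  shows "(\<Sum>i\<in>I. outP P (A i)) \<le> outP P (\<Union>i\<in>I. A i)"
proof (rule outP_ge)
  show "(\<Union>i\<in>I. A i) \<subseteq> space P" using assms sets.sets_into_space by fastforce
next
  fix T assume T: "T \<in> sets P" "(\<Union>i\<in>I. A i) \<subseteq> T"
  have "(\<Sum>i\<in>I. outP P (A i)) \<le> (\<Sum>i\<in>I. measure P (T \<inter> Q i))"
    using T assms by (intro sum_mono outP_le) auto
  also have "\<dots> = measure P (\<Union>i\<in>I. T \<inter> Q i)"
    using T assms
    by (intro finite_measure.finite_measure_finite_Union[symmetric])
       (auto simp: disjoint_family_on_def, blast)
  also have "\<dots> \<le> measure P T"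
    using T assms by (intro finite_measure.finite_measure_mono) auto
  finally show "(\<Sum>i\<in>I. outP P (A i)) \<le> measure P T" .
qed

lemma cls_sets:
  assumes "classifier P K Gs"
  shows "cls P Gs i \<in> sets P"
proof -
  have "Gs -` {i} \<inter> space P \<in> sets P"
    using assms unfolding classifier_def by (intro measurable_sets) auto
  moreover have "cls P Gs i = Gs -` {i} \<inter> space P" unfolding cls_def by auto
  ultimately show ?thesis by simp
qed

text \<open>One class: s = P(S \<inter> Q_i), q = P(Q_i), n the outer mass of the neighbourhood of
  S \<inter> Q_i within Q_i and d that of its new part. If q = 0 then s = 0 and the junk value
  n / 0 = 0 is harmless.\<close>

lemma expansion_gain_lower_bound:
  fixes b s q n d :: real
  assumes "b > 1" "0 \<le> s" "s \<le> q / 2" "0 \<le> d"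
    and expand: "min (b * (s / q)) 1 \<le> n / q" and "n \<le> d + s"
  shows "min (b - 1) 1 * s \<le> d"
proof (cases "q = 0")
  case True
  then show ?thesis using assms by simp
next
  case False
  then have "q > 0" using assms by simp
  then have "n \<ge> b * s \<or> n \<ge> q"
    using expand by (auto simp: min_def field_simps split: if_splits)
  moreover have "min (b - 1) 1 * s \<le> (b - 1) * s" "min (b - 1) 1 * s \<le> 1 * s"
    using \<open>0 \<le> s\<close> by (intro mult_right_mono; simp)+
  ultimately show ?thesis using assms by (auto simp: algebra_simps)
qed

lemma mult_expansion_imp_const_expansion:
  fixes P :: "'a::real_normed_vector measure"
  assumes "prob_space P" and Gs: "classifier P K Gs" and b: "b > 1"
    and expand: "mult_expansion P Twa r Gs K (1/2) b"
  shows "const_expansion P Twa r Gs K (\<rho> / (b - 1)) \<rho>"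
  unfolding const_expansion_def
proof (intro ballI impI)
  have fin: "finite_measure P" using \<open>prob_space P\<close> by (simp add: prob_space_def)
  fix S assume S: "S \<in> sets P" and large: "\<rho> / (b - 1) \<le> measure P S"
    and half: "\<forall>i\<in>{1..K}. measure P (S \<inter> cls P Gs i) \<le> measure P (cls P Gs i) / 2"
  define Q where "Q i = cls P Gs i" for i
  define A where "A i = nbhd_set P Twa r (S \<inter> Q i) \<inter> Q i" for i
  define k where "k = min (b - 1) 1"
  have Q_sets: "Q i \<in> sets P" for i unfolding Q_def using Gs by (rule cls_sets)
  have Q_disj: "disjoint_family_on Q {1..K}"
    unfolding disjoint_family_on_def Q_def cls_def by auto
  have A_space: "A i \<subseteq> space P" for i
    unfolding A_def using Q_sets sets.sets_into_space by blast
  have "S = (\<Union>i\<in>{1..K}. S \<inter> Q i)"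
    using sets.sets_into_space[OF S] Gs unfolding classifier_def Q_def cls_def by auto
  also have "measure P \<dots> = (\<Sum>i\<in>{1..K}. measure P (S \<inter> Q i))"
    using S Q_sets Q_disj
    by (intro finite_measure.finite_measure_finite_Union[OF fin])
       (auto simp: disjoint_family_on_def)
  finally have S_sum: "measure P S = (\<Sum>i\<in>{1..K}. measure P (S \<inter> Q i))" .
  have gain: "k * measure P (S \<inter> Q i) \<le> outP P (A i - S \<inter> Q i)" if i: "i \<in> {1..K}" for i
    unfolding k_def
  proof (rule expansion_gain_lower_bound[OF b])
    show le_half: "measure P (S \<inter> Q i) \<le> measure P (Q i) / 2" using half i unfolding Q_def by blast
    then have "measure P (S \<inter> Q i) / measure P (Q i) \<le> 1/2"
      by (cases "measure P (Q i) = 0") (simp_all add: divide_le_eq)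
    moreover have "S \<inter> Q i \<in> sets P" "S \<inter> Q i \<subseteq> cls P Gs i"
      using S Q_sets unfolding Q_def by auto
    ultimately show "min (b * (measure P (S \<inter> Q i) / measure P (Q i))) 1 \<le> outP P (A i) / measure P (Q i)"
      using expand i unfolding mult_expansion_def A_def Q_def by blast
    show "outP P (A i) \<le> outP P (A i - S \<inter> Q i) + measure P (S \<inter> Q i)"
      using fin A_space S Q_sets by (intro outP_le_outP_diff_add) auto
  qed (use A_space in \<open>auto intro: outP_nonneg\<close>)
  have "k * measure P S \<le> (\<Sum>i\<in>{1..K}. outP P (A i - S \<inter> Q i))"
    unfolding S_sum sum_distrib_left using gain by (intro sum_mono) auto
  also have "\<dots> \<le> outP P (\<Union>i\<in>{1..K}. A i - S \<inter> Q i)"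
    using fin Q_sets Q_disj by (intro outP_sum_le_outP_UNION) (auto simp: A_def)
  also have "(\<Union>i\<in>{1..K}. A i - S \<inter> Q i) = nbhd_star P Twa r Gs K S - S"
    unfolding nbhd_star_def A_def Q_def by auto
  finally have "k * measure P S \<le> outP P (nbhd_star P Twa r Gs K S - S)" .
  moreover have "min \<rho> (measure P S) \<le> k * measure P S"
    using large b by (auto simp: k_def min_def field_simps)
  ultimately show "min \<rho> (measure P S) \<le> outP P (nbhd_star P Twa r Gs K S - S)" by linarith
qed

lemma err_unsup_le_of_guarantee:
  fixes P :: "'a::real_normed_vector measure"
  assumes guarantee: "\<forall>H c \<rho>. classifier P K H \<and> const_expansion P Twa r Gs K c \<rho>
            \<and> consist_loss P Twa r H < \<rho>
            \<and> min_class_mass P K H > 2 * max c (consist_loss P Twa r H)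
          \<longrightarrow> (\<exists>\<pi>. \<pi> permutes {1..K} \<and>
                 measure P {x \<in> space P. \<pi> (H x) \<noteq> Gs x}
                   \<le> max c (consist_loss P Twa r H) + consist_loss P Twa r H)"
    and "classifier P K G" "const_expansion P Twa r Gs K c \<rho>" "consist_loss P Twa r G < \<rho>"
    and "min_class_mass P K G > 2 * max c (consist_loss P Twa r G)"
  shows "err_unsup P Gs K G \<le> max c (consist_loss P Twa r G) + consist_loss P Twa r G"
proof -
  obtain \<pi> where "\<pi> permutes {1..K}" and
    err: "measure P {x \<in> space P. \<pi> (G x) \<noteq> Gs x}
      \<le> max c (consist_loss P Twa r G) + consist_loss P Twa r G"
    using guarantee assms(2-) by blast
  then have "err_unsup P Gs K G \<le> measure P {x \<in> space P. \<pi> (G x) \<noteq> Gs x}"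
    unfolding err_unsup_def by (intro Min_le) (auto simp: finite_permutations)
  with err show ?thesis by linarith
qed

theorem lemma2:
  fixes P :: "'a::real_normed_vector measure"
    and Twa :: "('a \<Rightarrow> 'a) set" and r :: real
    and Gs G :: "'a \<Rightarrow> nat" and K :: nat and b :: real
  assumes "prob_space P"
    and "K \<ge> 1"
    and "classifier P K Gs"
    and "b > 1"
    and "mult_expansion P Twa r Gs K (1/2) b"
    and "\<forall>H c \<rho>. classifier P K H \<and> const_expansion P Twa r Gs K c \<rho>
            \<and> consist_loss P Twa r H < \<rho>
            \<and> min_class_mass P K H > 2 * max c (consist_loss P Twa r H)
          \<longrightarrow> (\<exists>\<pi>. \<pi> permutes {1..K} \<and>
                 measure P {x \<in> space P. \<pi> (H x) \<noteq> Gs x}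
                   \<le> max c (consist_loss P Twa r H) + consist_loss P Twa r H)"
    and "classifier P K G"
    and "min_class_mass P K G > max (2 / (b - 1)) 2 * consist_loss P Twa r G"
  shows "err_unsup P Gs K G \<le> max (b / (b - 1)) 2 * consist_loss P Twa r G"
proof -
  define R where "R = consist_loss P Twa r G"
  define M where "M = max (R / (b - 1)) R"
  have "0 \<le> R" unfolding R_def consist_loss_def by (rule outP_nonneg) auto
  have "max (2 / (b - 1)) 2 * R = 2 * M"
    using \<open>0 \<le> R\<close> by (simp add: M_def max_mult_distrib_right max_mult_distrib_left)
  then have mass: "min_class_mass P K G > 2 * M" using assms(8) unfolding R_def by simp
  have "max (b / (b - 1)) 2 * R = max (b / (b - 1) * R) (2 * R)"
    using \<open>0 \<le> R\<close> by (simp add: max_mult_distrib_right)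
  also have "b / (b - 1) * R = R / (b - 1) + R" using \<open>b > 1\<close> by (simp add: field_simps)
  finally have bound: "max (b / (b - 1)) 2 * R = M + R" by (simp add: M_def max_def)
  have close: "err_unsup P Gs K G \<le> M + R + t"
    if "0 < t" "t < (min_class_mass P K G - 2 * M) / 2" for t
  proof -
    define \<rho> where "\<rho> = R + (b - 1) * t"
    have "\<rho> / (b - 1) = R / (b - 1) + t" using \<open>b > 1\<close> by (simp add: \<rho>_def field_simps)
    then have c: "max (\<rho> / (b - 1)) R \<le> M + t" using \<open>0 < t\<close> unfolding M_def by linarith
    have "err_unsup P Gs K G \<le> max (\<rho> / (b - 1)) R + R" unfolding R_def
    proof (rule err_unsup_le_of_guarantee[OF assms(6,7)])
      show "const_expansion P Twa r Gs K (\<rho> / (b - 1)) \<rho>"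
        using assms(1,3,4,5) by (rule mult_expansion_imp_const_expansion)
      show "consist_loss P Twa r G < \<rho>" using that \<open>b > 1\<close> by (simp add: \<rho>_def R_def)
      show "2 * max (\<rho> / (b - 1)) (consist_loss P Twa r G) < min_class_mass P K G"
        using c that unfolding R_def by (auto simp: max_def)
    qed
    with c show ?thesis by linarith
  qed
  have "err_unsup P Gs K G \<le> M + R"
  proof (rule field_le_epsilon)
    fix t :: real assume "0 < t"
    have "err_unsup P Gs K G \<le> M + R + min t ((min_class_mass P K G - 2 * M) / 4)"
      by (rule close) (use \<open>0 < t\<close> mass in \<open>auto simp: min_def\<close>)
    then show "err_unsup P Gs K G \<le> M + R + t" using min.cobounded1[of t] by linarith
  qed
  then show ?thesis using bound unfolding R_def by simp
qed

end
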